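(* The solutions $\phi=\phi(b^2,s)$ of the PDE $\phi_{22}=2(\phi_1-s\phi_{12})$ are given by $$\phi(b^2,s)=f(b^2-s^2)+2s\int_0^s f'(b^2-\sigma^2)\,d\sigma+g(b^2)\,s,$$ where $f$ and $g$ are arbitrary smooth functions.
   Context: $\phi(b^2,s)$ is a smooth function of two variables; $\phi_1$ denotes the partial derivative with respect to the first variable $b^2$ and $\phi_2$ the partial derivative with respect to $s$; similarly $\phi_{12},\phi_{22}$. *)

theory Defs
  imports "HOL-Analysis.Analysis"
begin

definition smooth1 :: "(real \<Rightarrow> real) \<Rightarrow> bool" where
  "smooth1 f \<longleftrightarrow> (\<exists>D :: nat \<Rightarrow> real \<Rightarrow> real. D 0 = f \<and>
     (\<forall>n x. (D n has_real_derivative D (Suc n) x) (at x)))"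

definition smooth2 :: "(real \<Rightarrow> real \<Rightarrow> real) \<Rightarrow> bool" where
  "smooth2 F \<longleftrightarrow> (\<exists>D :: nat \<Rightarrow> nat \<Rightarrow> real \<Rightarrow> real \<Rightarrow> real. D 0 0 = F \<and>
     (\<forall>i j x y. ((\<lambda>x'. D i j x' y) has_real_derivative D (Suc i) j x y) (at x) \<and>
                ((\<lambda>y'. D i j x y') has_real_derivative D i (Suc j) x y) (at y)) \<and>
     (\<forall>i j. continuous_on UNIV (\<lambda>p. D i j (fst p) (snd p))))"

definition pd1 :: "(real \<Rightarrow> real \<Rightarrow> real) \<Rightarrow> real \<Rightarrow> real \<Rightarrow> real" where
  "pd1 F x y = deriv (\<lambda>x'. F x' y) x"

definition pd2 :: "(real \<Rightarrow> real \<Rightarrow> real) \<Rightarrow> real \<Rightarrow> real \<Rightarrow> real" where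
  "pd2 F x y = deriv (\<lambda>y'. F x y') y"

definition oint :: "real \<Rightarrow> real \<Rightarrow> (real \<Rightarrow> real) \<Rightarrow> real" where
  "oint a b h = (if a \<le> b then integral {a..b} h else - integral {b..a} h)"

end

theory Submission
  imports Defs
begin

text \<open>
  Put \<open>X = s \<phi>\<^sub>2 - \<phi>\<close>. Then \<open>X\<^sub>2 = s \<phi>\<^sub>2\<^sub>2\<close> and \<open>X\<^sub>1 = s \<phi>\<^sub>1\<^sub>2 - \<phi>\<^sub>1\<close>, so the
  equation says \<open>X\<^sub>2 + 2 s X\<^sub>1 = 0\<close> (for \<open>s \<noteq> 0\<close>, hence everywhere by continuity):
  \<open>X\<close> is constant along the parabolas \<open>b\<^sup>2 - s\<^sup>2 = const\<close>, i.e.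
  \<open>X(b\<^sup>2, s) = X(b\<^sup>2 - s\<^sup>2, 0) = -f(b\<^sup>2 - s\<^sup>2)\<close> with \<open>f = \<phi>(\<cdot>, 0)\<close>.
  For fixed \<open>b\<^sup>2\<close> this is the linear ODE \<open>s \<phi>\<^sub>2 - \<phi> = -f(b\<^sup>2 - s\<^sup>2)\<close>; the given formula is a
  particular solution, and the homogeneous equation \<open>s h' = h\<close> has only the solutions
  \<open>h = c s\<close>, which account for the term \<open>g(b\<^sup>2) s\<close>.
\<close>

lemma DERIV_compose_partials:
  fixes F Fu Fs :: "real \<Rightarrow> real \<Rightarrow> real"
  assumes du: "\<And>x y. ((\<lambda>x'. F x' y) has_real_derivative Fu x y) (at x)"
    and ds: "\<And>x y. ((\<lambda>y'. F x y') has_real_derivative Fs x y) (at y)"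
    and cs: "continuous_on UNIV (\<lambda>p. Fs (fst p) (snd p))"
    and da: "(a has_real_derivative a') (at t)"
    and db: "(b has_real_derivative b') (at t)"
  shows "((\<lambda>t. F (a t) (b t)) has_real_derivative Fu (a t) (b t) * a' + Fs (a t) (b t) * b') (at t)"
proof -
  let ?x = "a t" and ?y = "b t"
  have fx: "((\<lambda>x. F x ?y) has_derivative (*) (Fu ?x ?y)) (at ?x within UNIV)"
    using du by (simp add: has_field_derivative_def)
  have fy: "\<And>x y. x \<in> UNIV \<Longrightarrow> y \<in> UNIV \<Longrightarrow>
      ((\<lambda>y. F x y) has_derivative blinfun_apply (blinfun_mult_right (Fs x y))) (at y within UNIV)"
    using ds by (simp add: has_field_derivative_def)
  have "continuous_on UNIV (\<lambda>p. blinfun_mult_right (Fs (fst p) (snd p)))"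
    by (intro continuous_on_compose2[OF _ cs] linear_continuous_on bounded_linear_blinfun_mult_right) auto
  then have cont: "continuous (at (?x, ?y) within UNIV \<times> UNIV) (\<lambda>(x, y). blinfun_mult_right (Fs x y))"
    by (simp add: continuous_on_eq_continuous_within split_beta')
  have "((\<lambda>(x, y). F x y) has_derivative
      (\<lambda>(tx, ty). Fu ?x ?y * tx + blinfun_apply (blinfun_mult_right (Fs ?x ?y)) ty)) (at (?x, ?y) within UNIV \<times> UNIV)"
    by (rule has_derivative_partialsI[OF fx fy cont]) auto
  then have H: "((\<lambda>(x, y). F x y) has_derivative (\<lambda>(tx, ty). Fu ?x ?y * tx + Fs ?x ?y * ty)) (at (?x, ?y))"
    by simp
  have P: "((\<lambda>t. (a t, b t)) has_derivative (\<lambda>h. (h * a', h * b'))) (at t)"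
    using has_derivative_Pair[OF da[unfolded has_field_derivative_def] db[unfolded has_field_derivative_def]]
    by (simp add: mult.commute)
  show ?thesis
    using diff_chain_at[OF P H, unfolded o_def] unfolding has_field_derivative_def
    by simp (erule has_derivative_eq_rhs, auto simp: fun_eq_iff algebra_simps)
qed

lemma oint_has_real_derivative:
  fixes h :: "real \<Rightarrow> real"
  assumes hc: "continuous_on UNIV h"
  shows "((\<lambda>s. oint a s h) has_real_derivative h s) (at s)"
proof -
  define M where "M = \<bar>s\<bar> + \<bar>a\<bar> + 1"
  define G where "G x = integral {-M..x} h" for x
  have int: "h integrable_on {c..d}" for c d
    by (rule integrable_continuous_real) (rule continuous_on_subset[OF hc], auto)
  have eq: "oint a x h = G x - G a" if "x \<in> {-M<..<M}" for x
  proof (cases "a \<le> x")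
    case True
    have "integral {-M..a} h + integral {a..x} h = integral {-M..x} h"
      by (rule Henstock_Kurzweil_Integration.integral_combine[where c=a])
        (use that True M_def int in auto)
    then show ?thesis using True by (simp add: oint_def G_def)
  next
    case False
    have "integral {-M..x} h + integral {x..a} h = integral {-M..a} h"
      by (rule Henstock_Kurzweil_Integration.integral_combine[where c=x])
        (use that False M_def int in auto)
    then show ?thesis using False by (simp add: oint_def G_def)
  qed
  have "(G has_real_derivative h s) (at s within {-M..M})"
    unfolding G_def
    by (rule integral_has_real_derivative) (use M_def in \<open>auto intro: continuous_on_subset[OF hc]\<close>)
  then have "(G has_real_derivative h s) (at s)"
    using M_def by (subst (asm) at_within_interior) auto
  then have "((\<lambda>x. G x - G a) has_real_derivative h s) (at s)"
    by (auto intro!: derivative_eq_intros)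
  then show ?thesis
    by (rule has_field_derivative_transform_within_open[of _ _ _ "{-M<..<M}"]) (use M_def eq in auto)
qed

text \<open>The Euler equation \<open>s h' = h\<close> forces \<open>h s / s\<close> to be constant on each half line;
  that constant is the slope \<open>h' 0\<close> of \<open>h\<close> at the origin.\<close>

lemma euler_ode_vanishes_pos:
  fixes h h' :: "real \<Rightarrow> real"
  assumes d: "\<And>s. (h has_real_derivative h' s) (at s)"
    and e: "\<And>s. s * h' s = h s" and z: "h' 0 = 0" and s: "s > 0"
  shows "h s = 0"
proof -
  have h0: "h 0 = 0" using e[of 0] by simp
  have const: "h t / t = h s / s" if t: "0 < t" "t < s" for t
  proof (rule DERIV_isconst2[where f="\<lambda>x. h x / x", symmetric])
    show "continuous_on {t..s} (\<lambda>x. h x / x)"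
      using t by (auto intro!: continuous_intros continuous_at_imp_continuous_on DERIV_isCont[OF d])
    fix x assume x: "t < x" "x < s"
    have "((\<lambda>x. h x / x) has_real_derivative (h' x * x - h x * 1) / (x * x)) (at x)"
      using x t by (intro DERIV_divide d DERIV_ident) auto
    moreover have "(h' x * x - h x * 1) / (x * x) = 0"
      using e[of x] by (simp add: mult.commute)
    ultimately show "((\<lambda>x. h x / x) has_real_derivative 0) (at x)" by metis
  qed (use t in auto)
  have "(h has_real_derivative 0) (at 0 within {0<..})"
    using d z has_field_derivative_at_within by metis
  then have slope: "((\<lambda>y. (h y - h 0) / (y - 0)) \<longlongrightarrow> 0) (at_right 0)"
    by (simp add: has_field_derivative_iff)
  have "\<forall>\<^sub>F y in at_right 0. h s / s = (h y - h 0) / (y - 0)"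
    using eventually_at_right_real[OF s] by eventually_elim (use const h0 in auto)
  then have "((\<lambda>y. (h y - h 0) / (y - 0)) \<longlongrightarrow> h s / s) (at_right 0)"
    by (rule Lim_transform_eventually[OF tendsto_const])
  from tendsto_unique[OF _ this slope] have "h s / s = 0" by simp
  then show ?thesis using s by simp
qed

lemma euler_ode_vanishes:
  fixes h h' :: "real \<Rightarrow> real"
  assumes d: "\<And>s. (h has_real_derivative h' s) (at s)"
    and e: "\<And>s. s * h' s = h s" and z: "h' 0 = 0"
  shows "h s = 0"
proof -
  consider "s > 0" | "s = 0" | "s < 0" by linarith
  then show ?thesis
  proof cases
    case 1
    then show ?thesis using euler_ode_vanishes_pos[OF d e z] by blast
  next
    case 2
    then show ?thesis using e[of 0] by simp
  next
    case 3
    have "((\<lambda>x. h (- x)) has_real_derivative - h' (- x)) (at x)" for x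
      using DERIV_chain2[OF d DERIV_minus[OF DERIV_ident]] by simp
    then have "h (- (- s)) = 0"
      by (rule euler_ode_vanishes_pos) (use z 3 in \<open>auto simp: e[symmetric]\<close>)
    then show ?thesis by simp
  qed
qed

lemma isCont_vanishes_if_vanishes_off:
  fixes E :: "real \<Rightarrow> real"
  assumes "isCont E x" and "\<And>t. t \<noteq> x \<Longrightarrow> E t = 0"
  shows "E x = 0"
proof -
  have "\<forall>\<^sub>F t in at x. 0 = E t"
    unfolding eventually_at_filter by (rule always_eventually) (use assms(2) in auto)
  then have "(E \<longlongrightarrow> 0) (at x)"
    by (rule Lim_transform_eventually[OF tendsto_const])
  then show ?thesis
    using assms(1) tendsto_unique[OF _ _ \<open>(E \<longlongrightarrow> 0) (at x)\<close>] by (simp add: isCont_def)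
qed

lemma transport_const_on_parabolas:
  fixes X Xu Xs :: "real \<Rightarrow> real \<Rightarrow> real"
  assumes du: "\<And>u s. ((\<lambda>u'. X u' s) has_real_derivative Xu u s) (at u)"
    and ds: "\<And>u s. ((\<lambda>s'. X u s') has_real_derivative Xs u s) (at s)"
    and cs: "continuous_on UNIV (\<lambda>p. Xs (fst p) (snd p))"
    and transport: "\<And>u s. Xs u s = - 2 * s * Xu u s"
  shows "X u s = X (u - s\<^sup>2) 0"
proof -
  have "((\<lambda>t. X (u - s\<^sup>2 + t\<^sup>2) t) has_real_derivative 0) (at t)" for t
  proof -
    have "((\<lambda>t. u - s\<^sup>2 + t\<^sup>2) has_real_derivative 2 * t) (at t)"
      by (auto intro!: derivative_eq_intros)
    from DERIV_compose_partials[OF du ds cs this DERIV_ident]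
    show ?thesis by (simp add: transport)
  qed
  then have "X (u - s\<^sup>2 + s\<^sup>2) s = X (u - s\<^sup>2 + 0\<^sup>2) 0"
    by (rule DERIV_isconst_all[OF allI])
  then show ?thesis by simp
qed

lemma transport_of_const_on_parabolas:
  fixes X Xu Xs :: "real \<Rightarrow> real \<Rightarrow> real"
  assumes du: "((\<lambda>u'. X u' s) has_real_derivative Xu u s) (at u)"
    and ds: "((\<lambda>s'. X u s') has_real_derivative Xs u s) (at s)"
    and dF: "(F has_real_derivative F') (at (u - s\<^sup>2))"
    and X: "\<And>u s. X u s = F (u - s\<^sup>2)"
  shows "Xs u s = - 2 * s * Xu u s"
proof -
  have "((\<lambda>u'. u' - s\<^sup>2) has_real_derivative 1) (at u)"
    by (auto intro!: derivative_eq_intros)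
  from DERIV_chain2[OF dF this] have "((\<lambda>u'. X u' s) has_real_derivative F' * 1) (at u)"
    unfolding X .
  moreover have "((\<lambda>s'. u - s'\<^sup>2) has_real_derivative - 2 * s) (at s)"
    by (auto intro!: derivative_eq_intros)
  from DERIV_chain2[OF dF this] have "((\<lambda>s'. X u s') has_real_derivative F' * (- 2 * s)) (at s)"
    unfolding X .
  ultimately show ?thesis
    using DERIV_unique[OF du] DERIV_unique[OF ds] by simp
qed

definition solution_formula :: "(real \<Rightarrow> real) \<Rightarrow> (real \<Rightarrow> real) \<Rightarrow> real \<Rightarrow> real \<Rightarrow> real" where
  "solution_formula f g u s = f (u - s\<^sup>2) + 2 * s * oint 0 s (\<lambda>\<sigma>. deriv f (u - \<sigma>\<^sup>2)) + g u * s"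

lemma smooth1_has_continuous_deriv:
  assumes "smooth1 f"
  shows "(f has_real_derivative deriv f x) (at x)" and "continuous_on UNIV (deriv f)"
proof -
  obtain D where D0: "D 0 = f" and D: "\<And>n x. (D n has_real_derivative D (Suc n) x) (at x)"
    using assms unfolding smooth1_def by blast
  have "deriv f = D 1"
    using D[of 0] D0 by (auto simp: fun_eq_iff intro!: DERIV_imp_deriv)
  then show "(f has_real_derivative deriv f x) (at x)" and "continuous_on UNIV (deriv f)"
    using D[of 0] D0 by (auto intro!: continuous_at_imp_continuous_on DERIV_isCont[OF D])
qed

lemma solution_formula_has_derivative_2:
  assumes "smooth1 f"
  shows "((\<lambda>s. solution_formula f g u s) has_real_derivative
           2 * oint 0 s (\<lambda>\<sigma>. deriv f (u - \<sigma>\<^sup>2)) + g u) (at s)"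
proof -
  note df = smooth1_has_continuous_deriv[OF assms]
  have "continuous_on UNIV (\<lambda>\<sigma>. deriv f (u - \<sigma>\<^sup>2))"
    by (rule continuous_on_compose2[OF df(2)]) (auto intro!: continuous_intros)
  note I = oint_has_real_derivative[OF this, of 0 s]
  have F: "((\<lambda>s. f (u - s\<^sup>2)) has_real_derivative deriv f (u - s\<^sup>2) * (- (2 * s))) (at s)"
    by (rule DERIV_chain2[OF df(1)]) (auto intro!: derivative_eq_intros)
  show ?thesis
    unfolding solution_formula_def
    by (rule derivative_eq_intros F I | simp)+
qed

lemma solution_formula_euler:
  "s * (2 * oint 0 s (\<lambda>\<sigma>. deriv f (u - \<sigma>\<^sup>2)) + g u) - solution_formula f g u s = - f (u - s\<^sup>2)"
  by (simp add: solution_formula_def algebra_simps)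

locale smooth2_partials =
  fixes D :: "nat \<Rightarrow> nat \<Rightarrow> real \<Rightarrow> real \<Rightarrow> real"
  assumes has_deriv_1: "\<And>i j u s. ((\<lambda>u'. D i j u' s) has_real_derivative D (Suc i) j u s) (at u)"
    and has_deriv_2: "\<And>i j u s. ((\<lambda>s'. D i j u s') has_real_derivative D i (Suc j) u s) (at s)"
    and continuous: "\<And>i j. continuous_on UNIV (\<lambda>p. D i j (fst p) (snd p))"
begin

lemma pd1_eq: "pd1 (D i j) = D (Suc i) j"
  by (auto simp: fun_eq_iff pd1_def intro!: DERIV_imp_deriv has_deriv_1)

lemma pd2_eq: "pd2 (D i j) = D i (Suc j)"
  by (auto simp: fun_eq_iff pd2_def intro!: DERIV_imp_deriv has_deriv_2)

definition defect :: "real \<Rightarrow> real \<Rightarrow> real" where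
  "defect u s = s * D 0 1 u s - D 0 0 u s"

lemma defect_has_deriv_1:
  "((\<lambda>u'. defect u' s) has_real_derivative s * D 1 1 u s - D 1 0 u s) (at u)"
  unfolding defect_def
  by (intro DERIV_diff DERIV_cmult)
    (use has_deriv_1[where i=0 and j=1] has_deriv_1[where i=0 and j=0] in simp_all)

lemma defect_has_deriv_2:
  "((\<lambda>s'. defect u s') has_real_derivative s * D 0 2 u s) (at s)"
proof -
  have "((\<lambda>s'. s' * D 0 1 u s') has_real_derivative 1 * D 0 1 u s + s * D 0 2 u s) (at s)"
    using DERIV_mult[OF DERIV_ident has_deriv_2[where i=0 and j=1]]
    by (simp add: numeral_2_eq_2 mult.commute)
  from DERIV_diff[OF this has_deriv_2[where i=0 and j=0 and u=u and s=s]] show ?thesis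
    by (simp add: defect_def)
qed

lemma pde_iff_defect_const_on_parabolas:
  "(\<forall>u s. D 0 2 u s = 2 * (D 1 0 u s - s * D 1 1 u s)) \<longleftrightarrow>
   (\<forall>u s. defect u s = defect (u - s\<^sup>2) 0)"
proof
  assume pde: "\<forall>u s. D 0 2 u s = 2 * (D 1 0 u s - s * D 1 1 u s)"
  have "continuous_on UNIV (\<lambda>p. snd p * D 0 2 (fst p) (snd p))"
    by (intro continuous_intros continuous)
  from transport_const_on_parabolas[OF defect_has_deriv_1 defect_has_deriv_2 this]
  show "\<forall>u s. defect u s = defect (u - s\<^sup>2) 0"
    using pde by (simp add: algebra_simps)
next
  assume const: "\<forall>u s. defect u s = defect (u - s\<^sup>2) 0"
  show "\<forall>u s. D 0 2 u s = 2 * (D 1 0 u s - s * D 1 1 u s)"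
  proof (intro allI)
    fix u s
    let ?E = "\<lambda>s. D 0 2 u s - 2 * (D 1 0 u s - s * D 1 1 u s)"
    have transport: "s * D 0 2 u s = - 2 * s * (s * D 1 1 u s - D 1 0 u s)" for s
    proof (rule transport_of_const_on_parabolas[OF defect_has_deriv_1 defect_has_deriv_2])
      show "((\<lambda>q. defect q 0) has_real_derivative - D 1 0 (u - s\<^sup>2) 0) (at (u - s\<^sup>2))"
        using has_deriv_1[where i=0 and j=0] by (simp add: defect_def DERIV_minus)
    qed (use const in auto)
    have E: "t * ?E t = 0" for t
      using transport[of t] by (simp add: algebra_simps)
    have "?E t = 0" if "t \<noteq> 0" for t
      using E[of t] that by simp
    moreover have "isCont ?E 0"
      by (intro continuous_intros DERIV_isCont[OF has_deriv_2])
    ultimately have "?E s = 0"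
      using isCont_vanishes_if_vanishes_off[where E="?E" and x=0] by (cases "s = 0") auto
    then show "D 0 2 u s = 2 * (D 1 0 u s - s * D 1 1 u s)" by simp
  qed
qed

lemma defect_const_on_parabolas_iff_solution_formula:
  "(\<forall>u s. defect u s = defect (u - s\<^sup>2) 0) \<longleftrightarrow>
   (\<exists>f g. smooth1 f \<and> smooth1 g \<and> (\<forall>u s. D 0 0 u s = solution_formula f g u s))"
proof
  assume const: "\<forall>u s. defect u s = defect (u - s\<^sup>2) 0"
  define f where "f x = D 0 0 x 0" for x
  define g where "g x = D 0 1 x 0" for x
  have sf: "smooth1 f" unfolding smooth1_def
    by (rule exI[where x="\<lambda>n x. D n 0 x 0"]) (auto simp: f_def fun_eq_iff intro: has_deriv_1)
  have sg: "smooth1 g" unfolding smooth1_def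
    by (rule exI[where x="\<lambda>n x. D n 1 x 0"]) (auto simp: g_def fun_eq_iff intro: has_deriv_1)
  have "D 0 0 u s = solution_formula f g u s" for u s
  proof -
    let ?I = "\<lambda>s. oint 0 s (\<lambda>\<sigma>. deriv f (u - \<sigma>\<^sup>2))"
    have "D 0 0 u s - solution_formula f g u s = 0"
    proof (rule euler_ode_vanishes[where h="\<lambda>s. D 0 0 u s - solution_formula f g u s"])
      show "((\<lambda>s. D 0 0 u s - solution_formula f g u s) has_real_derivative
              D 0 1 u s - (2 * ?I s + g u)) (at s)" for s
        by (intro DERIV_diff has_deriv_2[where i=0 and j=0, folded One_nat_def]
            solution_formula_has_derivative_2 sf)
      show "s * (D 0 1 u s - (2 * ?I s + g u)) = D 0 0 u s - solution_formula f g u s" for s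
        using const[rule_format, of u s] solution_formula_euler[of s f u g]
        by (simp add: defect_def f_def algebra_simps)
      show "D 0 1 u 0 - (2 * ?I 0 + g u) = 0"
        by (simp add: oint_def g_def)
    qed
    then show ?thesis by simp
  qed
  with sf sg show "\<exists>f g. smooth1 f \<and> smooth1 g \<and> (\<forall>u s. D 0 0 u s = solution_formula f g u s)"
    by blast
next
  assume "\<exists>f g. smooth1 f \<and> smooth1 g \<and> (\<forall>u s. D 0 0 u s = solution_formula f g u s)"
  then obtain f g where sf: "smooth1 f" and D00: "\<And>u s. D 0 0 u s = solution_formula f g u s"
    by blast
  have "defect u s = - f (u - s\<^sup>2)" for u s
  proof -
    have "D 0 1 u s = 2 * oint 0 s (\<lambda>\<sigma>. deriv f (u - \<sigma>\<^sup>2)) + g u"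
      using has_deriv_2[where i=0 and j=0 and u=u and s=s, unfolded D00[abs_def], folded One_nat_def]
      by (rule DERIV_unique[OF _ solution_formula_has_derivative_2[OF sf]])
    then show ?thesis
      using solution_formula_euler[of s f u g] by (simp add: defect_def D00)
  qed
  then show "\<forall>u s. defect u s = defect (u - s\<^sup>2) 0" by simp
qed

end

theorem lemma5p1:
  fixes \<phi> :: "real \<Rightarrow> real \<Rightarrow> real"
  assumes "smooth2 \<phi>"
  shows "(\<forall>u s. pd2 (pd2 \<phi>) u s = 2 * (pd1 \<phi> u s - s * pd2 (pd1 \<phi>) u s)) \<longleftrightarrow>
         (\<exists>f g. smooth1 f \<and> smooth1 g \<and>
            (\<forall>u s. \<phi> u s = f (u - s\<^sup>2) + 2 * s * oint 0 s (\<lambda>\<sigma>. deriv f (u - \<sigma>\<^sup>2)) + g u * s))"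
proof -
  obtain D where "D 0 0 = \<phi>" and "smooth2_partials D"
    using assms unfolding smooth2_def smooth2_partials_def by blast
  then interpret smooth2_partials D by simp
  have pd: "pd2 (pd2 (D 0 0)) = D 0 2" "pd1 (D 0 0) = D 1 0" "pd2 (D 1 0) = D 1 1"
    by (simp_all add: pd1_eq pd2_eq numeral_2_eq_2)
  show ?thesis
    unfolding \<open>D 0 0 = \<phi>\<close>[symmetric] pd
    unfolding pde_iff_defect_const_on_parabolas defect_const_on_parabolas_iff_solution_formula
    by (simp add: solution_formula_def)
qed

end
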